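(* Assume the setting and notation described in the context, and suppose the event $\mathcal{E}$ holds. Let $\gamma\in(0,1)$ and let $k'\ge k$ be an integer. Let $\mathbf{w}^{(0)}$ be the output $\hat{\mathbf{v}}$ of the SEP algorithm, and suppose its final support $S^{(k)}$ satisfies $\|\mathbf{v}_{S^{(k)}}\|_2\ge\sqrt{\gamma}$. Let $\mathbf{w}^{(T)}$ be the $T$-th iterate of the TPower refinement with keep-$k'$ thresholding started from $\mathbf{w}^{(0)}$. There exist absolute constants $C_1,C_2>0$ such that if $$ m\ \ge\ C_1\frac{(1+\theta)^2}{\theta^2\gamma^2}k'\log n, $$ then $$ \sin\angle\big(\mathbf{w}^{(T)},\mathbf{v}\big)\ \le\ C_2\frac{1+\theta}{\theta\gamma}\sqrt{\frac{k'\log n}{m}}\qquad\text{for all } T\ge 1. $$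
   Context: Let $n\ge 2$, $m\ge 1$, $\theta>0$, $k\in\{1,\dots,n\}$. Let $\mathbf{v}\in\mathbb{R}^n$ with $\|\mathbf{v}\|_2=1$ and at most $k$ nonzero entries. Let $\mathbf{x}_1,\dots,\mathbf{x}_m$ be i.i.d. $\mathcal{N}(\mathbf{0},\mathbf{I}_n+\theta\mathbf{v}\mathbf{v}^\top)$. Put $\hat{\boldsymbol{\Sigma}}=\frac1m\sum_i\mathbf{x}_i\mathbf{x}_i^\top$, $\hat{\boldsymbol{\Gamma}}=\hat{\boldsymbol{\Sigma}}-\mathbf{I}_n$, $\mathbf{W}=\hat{\boldsymbol{\Gamma}}-\theta\mathbf{v}\mathbf{v}^\top$. $\mathbf{A}_{S,U}$ denotes a submatrix, $\mathbf{v}_S$ the restriction of $\mathbf{v}$ to $S\subseteq[n]$; $\|\cdot\|_2$ is the Euclidean/spectral norm. For unit vectors, $\sin\angle(\mathbf{a},\mathbf{b})=\sqrt{1-\langle\mathbf{a},\mathbf{b}\rangle^2}$. Fix an absolute constant $C_0>0$; the event $\mathcal{E}$ is: for all $p\in[n]$ and all $S\subseteq[n]$ with $|S|=p$, $\|\mathbf{W}_{S,S}\|_2\le C_0(1+\theta)\sqrt{p\log n/m}$. "Absolute constant" means independent of $n,m,k,k',\theta,\mathbf{v},\gamma,T$. SEP algorithm: $S^{(1)}=\{j^\ast\}$ with $j^\ast$ maximizing $|\hat{\boldsymbol{\Gamma}}_{jj}|$; for $p=1,\dots,k-1$, $\hat{\mathbf{e}}^{(p)}$ is a unit top eigenvector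 (largest eigenvalue) of $\hat{\boldsymbol{\Gamma}}_{S^{(p)},S^{(p)}}$ zero-padded to $\mathbb{R}^n$, and $S^{(p+1)}$ is the index set of the $p+1$ largest entries of $|\hat{\boldsymbol{\Gamma}}\hat{\mathbf{e}}^{(p)}|$; output $\hat{\mathbf{v}}$ is a unit top eigenvector of $\hat{\boldsymbol{\Gamma}}_{S^{(k)},S^{(k)}}$ zero-padded to $\mathbb{R}^n$. TPower refinement with keep-$k'$ thresholding: $\mathbf{w}^{(t+1)}=\mathcal{H}_{k'}(\hat{\boldsymbol{\Gamma}}\mathbf{w}^{(t)})/\|\mathcal{H}_{k'}(\hat{\boldsymbol{\Gamma}}\mathbf{w}^{(t)})\|_2$, where $\mathcal{H}_{k'}$ keeps the $k'$ largest-magnitude entries of a vector and sets the others to zero. *)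

theory Defs
  imports Complex_Main
begin

text \<open>Vectors in R^n are functions nat => real (coordinates 0..n-1 used);
  n x n matrices are functions nat => nat => real. Dimensions are explicit
  because the absolute constants must be uniform in n.\<close>

definition vnorm :: "nat \<Rightarrow> (nat \<Rightarrow> real) \<Rightarrow> real" where
  "vnorm n u = sqrt (\<Sum>i<n. (u i)\<^sup>2)"

definition vdot :: "nat \<Rightarrow> (nat \<Rightarrow> real) \<Rightarrow> (nat \<Rightarrow> real) \<Rightarrow> real" where
  "vdot n a b = (\<Sum>i<n. a i * b i)"

definition matvec :: "nat \<Rightarrow> (nat \<Rightarrow> nat \<Rightarrow> real) \<Rightarrow> (nat \<Rightarrow> real) \<Rightarrow> (nat \<Rightarrow> real)" where
  "matvec n A u = (\<lambda>i. \<Sum>j<n. A i j * u j)"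

definition restr_norm :: "nat set \<Rightarrow> (nat \<Rightarrow> real) \<Rightarrow> real" where
  "restr_norm S u = sqrt (\<Sum>i\<in>S. (u i)\<^sup>2)"

definition sub_spec_norm :: "(nat \<Rightarrow> nat \<Rightarrow> real) \<Rightarrow> nat set \<Rightarrow> real" where
  "sub_spec_norm A S =
     Sup {sqrt (\<Sum>i\<in>S. (\<Sum>j\<in>S. A i j * u j)\<^sup>2) | u. (\<Sum>j\<in>S. (u j)\<^sup>2) = 1}"

definition Gamma_hat :: "nat \<Rightarrow> (nat \<Rightarrow> nat \<Rightarrow> real) \<Rightarrow> (nat \<Rightarrow> nat \<Rightarrow> real)" where
  "Gamma_hat m x = (\<lambda>j l. (1 / real m) * (\<Sum>i<m. x i j * x i l) - (if j = l then 1 else 0))"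

definition W_mat :: "nat \<Rightarrow> (nat \<Rightarrow> nat \<Rightarrow> real) \<Rightarrow> real \<Rightarrow> (nat \<Rightarrow> real) \<Rightarrow> (nat \<Rightarrow> nat \<Rightarrow> real)" where
  "W_mat m x \<theta> v = (\<lambda>j l. Gamma_hat m x j l - \<theta> * v j * v l)"

definition event_E :: "real \<Rightarrow> nat \<Rightarrow> nat \<Rightarrow> real \<Rightarrow> (nat \<Rightarrow> nat \<Rightarrow> real) \<Rightarrow> bool" where
  "event_E C0 n m \<theta> W \<longleftrightarrow>
     (\<forall>p\<in>{1..n}. \<forall>S. S \<subseteq> {..<n} \<and> card S = p \<longrightarrow>
        sub_spec_norm W S \<le> C0 * (1 + \<theta>) * sqrt (real p * ln (real n) / real m))"

definition sub_eigenpair :: "(nat \<Rightarrow> nat \<Rightarrow> real) \<Rightarrow> nat set \<Rightarrow> real \<Rightarrow> (nat \<Rightarrow> real) \<Rightarrow> bool" where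
  "sub_eigenpair A S lam u \<longleftrightarrow>
     (\<forall>j. j \<notin> S \<longrightarrow> u j = 0) \<and> (\<exists>j\<in>S. u j \<noteq> 0) \<and>
     (\<forall>i\<in>S. (\<Sum>j\<in>S. A i j * u j) = lam * u i)"

definition top_sub_eigvec :: "(nat \<Rightarrow> nat \<Rightarrow> real) \<Rightarrow> nat set \<Rightarrow> (nat \<Rightarrow> real) \<Rightarrow> bool" where
  "top_sub_eigvec A S u \<longleftrightarrow>
     (\<Sum>j\<in>S. (u j)\<^sup>2) = 1 \<and>
     (\<exists>lam. sub_eigenpair A S lam u \<and> (\<forall>lam' u'. sub_eigenpair A S lam' u' \<longrightarrow> lam' \<le> lam))"

text \<open>T is an index set of the r largest-magnitude entries of y (in [n]); ties broken arbitrarily.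
  If r > n all n indices are kept.\<close>
definition top_set :: "nat \<Rightarrow> nat \<Rightarrow> (nat \<Rightarrow> real) \<Rightarrow> nat set \<Rightarrow> bool" where
  "top_set n r y T \<longleftrightarrow>
     T \<subseteq> {..<n} \<and> card T = min r n \<and>
     (\<forall>i\<in>T. \<forall>j\<in>{..<n} - T. \<bar>y j\<bar> \<le> \<bar>y i\<bar>)"

definition SEP_run :: "nat \<Rightarrow> nat \<Rightarrow> (nat \<Rightarrow> nat \<Rightarrow> real) \<Rightarrow> (nat \<Rightarrow> nat set) \<Rightarrow>
     (nat \<Rightarrow> nat \<Rightarrow> real) \<Rightarrow> (nat \<Rightarrow> real) \<Rightarrow> bool" where
  "SEP_run n k G S e vhat \<longleftrightarrow>
     (\<exists>js<n. (\<forall>j<n. \<bar>G j j\<bar> \<le> \<bar>G js js\<bar>) \<and> S 1 = {js}) \<and>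
     (\<forall>p\<in>{1..k-1}. top_sub_eigvec G (S p) (e p) \<and>
                     top_set n (p + 1) (\<lambda>i. matvec n G (e p) i) (S (p + 1))) \<and>
     top_sub_eigvec G (S k) vhat"

definition hard_thr :: "nat set \<Rightarrow> (nat \<Rightarrow> real) \<Rightarrow> (nat \<Rightarrow> real)" where
  "hard_thr T y = (\<lambda>i. if i \<in> T then y i else 0)"

definition TPower_run :: "nat \<Rightarrow> nat \<Rightarrow> (nat \<Rightarrow> nat \<Rightarrow> real) \<Rightarrow> (nat \<Rightarrow> nat \<Rightarrow> real) \<Rightarrow> bool" where
  "TPower_run n k' G w \<longleftrightarrow>
     (\<forall>t. \<exists>T. top_set n k' (matvec n G (w t)) T \<and>
        w (Suc t) = (\<lambda>i. hard_thr T (matvec n G (w t)) i / vnorm n (hard_thr T (matvec n G (w t)))))"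

definition sin_angle :: "nat \<Rightarrow> (nat \<Rightarrow> real) \<Rightarrow> (nat \<Rightarrow> real) \<Rightarrow> real" where
  "sin_angle n a b = sqrt (1 - (vdot n a b)\<^sup>2)"

end

(*
  Write Gamma_hat = \<theta> v v\<^sup>T + W. On the event E, every principal submatrix of W of size
  at most 4k' has norm at most \<epsilon> = 2 C0 (1 + \<theta>) sqrt (k' log n / m), and the sample size
  condition says exactly that 16 \<epsilon> \<le> \<theta> \<gamma>.

  The SEP output u is a top eigenvector of a k-sparse principal submatrix, hence maximises the
  Rayleigh quotient there; comparing with v restricted to S^(k) gives
  \<theta> \<langle>u,v\<rangle>\<^sup>2 + \<epsilon> \<ge> \<theta> \<gamma> - \<epsilon>, so |\<langle>u,v\<rangle>| \<ge> \<gamma>/2.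

  One TPower step from a unit k'-sparse w with a = \<langle>w,v\<rangle> gives
  H_T(Gamma_hat w) = \<theta> a v + e with |e| \<le> 2 \<epsilon>: the keep-k' selection T can only drop
  coordinates of supp v that are dominated by coordinates it keeps outside supp v, where
  Gamma_hat w coincides with the noise W w. Hence sin \<angle> \<le> 4 \<epsilon> / (\<theta> |a|). While
  |a| \<ge> \<gamma>/2 this is at most 1/2, which in turn keeps |a| \<ge> 1/2 \<ge> \<gamma>/2, so every iterate
  satisfies sin \<angle> \<le> 8 \<epsilon> / (\<theta> \<gamma>).
*)

theory Submission
  imports Defs "HOL-Analysis.Analysis"
begin

section \<open>Norms, normalisation and angles\<close>

abbreviation vsupp :: "nat \<Rightarrow> (nat \<Rightarrow> real) \<Rightarrow> nat set" where
  "vsupp n u \<equiv> {i. i < n \<and> u i \<noteq> 0}"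

lemma L2_set_subset_mono:
  assumes "A \<subseteq> B" "finite B"
  shows "L2_set f A \<le> L2_set f B"
  unfolding L2_set_def by (intro real_sqrt_le_mono sum_mono2) (use assms in auto)

lemma L2_set_eq_on_subset:
  assumes "A \<subseteq> B" "finite B" "\<And>i. i \<in> B - A \<Longrightarrow> f i = 0"
  shows "L2_set f B = L2_set f A"
  unfolding L2_set_def by (rule arg_cong[where f = sqrt], rule sum.mono_neutral_right) (use assms in auto)

lemma L2_set_restrict:
  assumes "A \<subseteq> B" "finite B"
  shows "L2_set (\<lambda>i. if i \<in> A then f i else 0) B = L2_set f A"
proof -
  have "L2_set (\<lambda>i. if i \<in> A then f i else 0) B = L2_set (\<lambda>i. if i \<in> A then f i else 0) A"
    by (rule L2_set_eq_on_subset) (use assms in auto)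
  also have "\<dots> = L2_set f A" by (rule L2_set_cong) auto
  finally show ?thesis .
qed

lemma L2_set_uminus [simp]: "L2_set (\<lambda>i. - f i) A = L2_set f A"
  unfolding L2_set_def by simp

lemma L2_set_power2: "(L2_set f A)\<^sup>2 = (\<Sum>i\<in>A. (f i)\<^sup>2)"
  unfolding L2_set_def by (simp add: sum_nonneg)

lemma L2_set_mult_left: "L2_set (\<lambda>i. c * f i) A = \<bar>c\<bar> * L2_set f A"
proof -
  have "L2_set (\<lambda>i. c * f i) A = L2_set (\<lambda>i. \<bar>c\<bar> * f i) A"
    unfolding L2_set_def by (simp add: power_mult_distrib)
  also have "\<dots> = \<bar>c\<bar> * L2_set f A" by (rule L2_set_right_distrib[symmetric]) simp
  finally show ?thesis .
qed

lemma vnorm_eq_L2_set: "vnorm n u = L2_set u {..<n}"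
  by (simp add: vnorm_def L2_set_def)

definition vnormalize :: "nat \<Rightarrow> (nat \<Rightarrow> real) \<Rightarrow> nat \<Rightarrow> real" where
  "vnormalize n u = (\<lambda>i. u i / vnorm n u)"

lemma vnorm_vnormalize: "vnorm n u \<noteq> 0 \<Longrightarrow> vnorm n (vnormalize n u) = 1"
  using L2_set_mult_left[of "1 / vnorm n u" u "{..<n}"]
  by (simp add: vnormalize_def vnorm_eq_L2_set)

lemma vnorm_ge_abs_sub_deviation:
  assumes "vnorm n v = 1"
  shows "\<bar>c\<bar> - vnorm n (\<lambda>i. h i - c * v i) \<le> vnorm n h"
proof -
  have "\<bar>c\<bar> = L2_set (\<lambda>i. h i + - (h i - c * v i)) {..<n}"
    using assms L2_set_mult_left[of c v "{..<n}"] by (simp add: vnorm_eq_L2_set)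
  also have "\<dots> \<le> vnorm n h + vnorm n (\<lambda>i. h i - c * v i)"
    using L2_set_triangle_ineq[of h "\<lambda>i. - (h i - c * v i)" "{..<n}"]
      L2_set_uminus[of "\<lambda>i. h i - c * v i" "{..<n}"]
    by (simp add: vnorm_eq_L2_set)
  finally show ?thesis by simp
qed

lemma sin_angle_vnormalize_le:
  assumes v: "vnorm n v = 1" and h: "0 < vnorm n h"
  shows "sin_angle n (vnormalize n h) v \<le> vnorm n (\<lambda>i. h i - c * v i) / vnorm n h"
proof -
  define N where "N = vnorm n h"
  define d where "d = vdot n h v"
  define \<eta> where "\<eta> = vnorm n (\<lambda>i. h i - c * v i)"
  have "\<eta>\<^sup>2 = N\<^sup>2 - 2 * c * d + c\<^sup>2 * (vnorm n v)\<^sup>2"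
    unfolding \<eta>_def N_def d_def vnorm_eq_L2_set L2_set_power2 vdot_def
    by (simp add: power2_diff sum_subtractf sum.distrib sum_distrib_left power_mult_distrib algebra_simps)
  then have "N\<^sup>2 - d\<^sup>2 \<le> \<eta>\<^sup>2"
    using v zero_le_power2[of "c - d"] by (simp add: power2_diff)
  have "vdot n (vnormalize n h) v = d / N"
    unfolding vdot_def vnormalize_def d_def N_def by (simp add: sum_divide_distrib)
  then have "1 - (vdot n (vnormalize n h) v)\<^sup>2 = (N\<^sup>2 - d\<^sup>2) / N\<^sup>2"
    using h unfolding N_def[symmetric] by (simp add: diff_divide_distrib power_divide)
  also have "\<dots> \<le> \<eta>\<^sup>2 / N\<^sup>2"
    using \<open>N\<^sup>2 - d\<^sup>2 \<le> \<eta>\<^sup>2\<close> by (simp add: divide_right_mono)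
  finally have "1 - (vdot n (vnormalize n h) v)\<^sup>2 \<le> (\<eta> / N)\<^sup>2"
    by (simp add: power_divide)
  then have "sin_angle n (vnormalize n h) v \<le> \<bar>\<eta> / N\<bar>"
    unfolding sin_angle_def using real_sqrt_le_mono by fastforce
  then show ?thesis using h unfolding \<eta>_def N_def by (simp add: vnorm_eq_L2_set)
qed

lemma half_le_abs_vdot_if_sin_angle_le_half:
  assumes "sin_angle n u v \<le> 1 / 2"
  shows "1 / 2 \<le> \<bar>vdot n u v\<bar>"
proof -
  have "(1 / 2)\<^sup>2 \<le> (vdot n u v)\<^sup>2"
  proof (cases "(vdot n u v)\<^sup>2 \<le> 1")
    case True
    then have "(sqrt (1 - (vdot n u v)\<^sup>2))\<^sup>2 \<le> (1 / 2)\<^sup>2"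
      using assms unfolding sin_angle_def by (intro power_mono) auto
    then show ?thesis using True by (simp add: power_divide)
  qed (simp add: power_divide)
  then have "\<bar>1 / 2\<bar> \<le> \<bar>vdot n u v\<bar>" unfolding abs_le_square_iff .
  then show ?thesis by simp
qed

section \<open>Rayleigh quotients of principal submatrices\<close>

definition bilin_form :: "(nat \<Rightarrow> nat \<Rightarrow> real) \<Rightarrow> nat set \<Rightarrow> (nat \<Rightarrow> real) \<Rightarrow> (nat \<Rightarrow> real) \<Rightarrow> real" where
  "bilin_form A S x y = (\<Sum>i\<in>S. x i * (\<Sum>j\<in>S. A i j * y j))"

lemma bilin_form_commute:
  assumes "\<And>i j. i \<in> S \<Longrightarrow> j \<in> S \<Longrightarrow> A i j = A j i"
  shows "bilin_form A S x y = bilin_form A S y x"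
proof -
  have "bilin_form A S x y = (\<Sum>i\<in>S. \<Sum>j\<in>S. x i * A i j * y j)"
    unfolding bilin_form_def by (simp add: sum_distrib_left mult.assoc)
  also have "\<dots> = (\<Sum>j\<in>S. \<Sum>i\<in>S. y j * A j i * x i)"
    using assms by (subst sum.swap) (intro sum.cong refl, simp add: mult.commute mult.left_commute)
  also have "\<dots> = bilin_form A S y x"
    unfolding bilin_form_def by (simp add: sum_distrib_left mult.assoc)
  finally show ?thesis .
qed

lemma bilin_form_add_scaled:
  "bilin_form A S (\<lambda>i. x i + t * h i) (\<lambda>i. x i + t * h i)
     = bilin_form A S x x + t * (bilin_form A S x h + bilin_form A S h x) + t\<^sup>2 * bilin_form A S h h"
  unfolding bilin_form_def by (simp add: algebra_simps sum.distrib sum_distrib_left power2_eq_square)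

lemma bilin_form_scaled: "bilin_form A S (\<lambda>i. c * x i) (\<lambda>i. c * x i) = c\<^sup>2 * bilin_form A S x x"
  unfolding bilin_form_def by (simp add: algebra_simps sum_distrib_left power2_eq_square)

lemma bilin_form_cong:
  "(\<And>i. i \<in> S \<Longrightarrow> x i = x' i) \<Longrightarrow> (\<And>i. i \<in> S \<Longrightarrow> y i = y' i) \<Longrightarrow> bilin_form A S x y = bilin_form A S x' y'"
  unfolding bilin_form_def by (intro sum.cong refl) auto

lemma bilin_form_eigen:
  assumes "\<And>i. i \<in> S \<Longrightarrow> (\<Sum>j\<in>S. A i j * u j) = c * u i"
  shows "bilin_form A S x u = c * (\<Sum>i\<in>S. x i * u i)"
  unfolding bilin_form_def using assms by (simp add: sum_distrib_left algebra_simps)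

lemma abs_bilin_form_le: "\<bar>bilin_form A S x x\<bar> \<le> L2_set x S * L2_set (\<lambda>i. \<Sum>j\<in>S. A i j * x j) S"
proof -
  have "\<bar>bilin_form A S x x\<bar> \<le> (\<Sum>i\<in>S. \<bar>x i\<bar> * \<bar>\<Sum>j\<in>S. A i j * x j\<bar>)"
    unfolding bilin_form_def by (rule order_trans[OF sum_abs]) (simp add: abs_mult)
  also have "\<dots> \<le> L2_set x S * L2_set (\<lambda>i. \<Sum>j\<in>S. A i j * x j) S"
    by (rule L2_set_mult_ineq)
  finally show ?thesis .
qed

lemma bilin_form_rank_one_update:
  assumes "\<And>i j. G i j = \<theta> * v i * v j + W i j"
  shows "bilin_form G S x x = \<theta> * (\<Sum>i\<in>S. v i * x i)\<^sup>2 + bilin_form W S x x"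
proof -
  have "bilin_form G S x x
      = (\<Sum>i\<in>S. \<theta> * (v i * x i) * (\<Sum>j\<in>S. v j * x j) + x i * (\<Sum>j\<in>S. W i j * x j))"
    unfolding bilin_form_def assms
    by (intro sum.cong refl) (simp add: sum.distrib sum_distrib_left algebra_simps)
  also have "\<dots> = \<theta> * (\<Sum>i\<in>S. v i * x i) * (\<Sum>j\<in>S. v j * x j) + bilin_form W S x x"
    unfolding bilin_form_def by (simp add: sum.distrib sum_distrib_left sum_distrib_right algebra_simps)
  finally show ?thesis by (simp add: power2_eq_square)
qed

lemma linear_coeff_eq_0_if_quadratic_nonpos:
  fixes B D :: real
  assumes "\<And>t. 2 * t * B + t\<^sup>2 * D \<le> 0"
  shows "B = 0"
proof (rule ccontr)
  assume "B \<noteq> 0"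
  define s where "s = 1 / (\<bar>D\<bar> + 1)"
  have "0 < s" "s * \<bar>D\<bar> < 1" by (auto simp: s_def field_simps)
  moreover have "s * (- \<bar>D\<bar>) \<le> s * D"
    using \<open>0 < s\<close> by (intro mult_left_mono) auto
  ultimately have "0 < 2 + s * D" by simp
  with \<open>B \<noteq> 0\<close> \<open>0 < s\<close> have "0 < B\<^sup>2 * s * (2 + s * D)" by simp
  also have "\<dots> = 2 * (s * B) * B + (s * B)\<^sup>2 * D" by (simp add: power2_eq_square algebra_simps)
  also have "\<dots> \<le> 0" by (rule assms)
  finally show False by simp
qed

lemma exists_max_bilin_form_unit:
  fixes A :: "nat \<Rightarrow> nat \<Rightarrow> real"
  assumes fin: "finite S" and "S \<noteq> {}"
  obtains u where "(\<Sum>i\<in>S. (u i)\<^sup>2) = 1" "\<And>j. j \<notin> S \<Longrightarrow> u j = 0"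
    "\<And>y. (\<Sum>i\<in>S. (y i)\<^sup>2) = 1 \<Longrightarrow> bilin_form A S y y \<le> bilin_form A S u u"
proof -
  \<comment> \<open>pinning the coordinates outside \<open>S\<close> to 0 makes the unit sphere compact in \<open>nat \<Rightarrow> real\<close>\<close>
  define box where "box = PiE UNIV (\<lambda>i. if i \<in> S then {-1..1::real} else {0})"
  define K where "K = box \<inter> {u. (\<Sum>i\<in>S. (u i)\<^sup>2) = 1}"
  have "compactin (product_topology (\<lambda>i. euclidean) UNIV) box"
    unfolding box_def by (subst compactin_PiE) auto
  then have "compact box" by (simp add: euclidean_product_topology)
  moreover have "closed {u::nat \<Rightarrow> real. (\<Sum>i\<in>S. (u i)\<^sup>2) = 1}"
    by (intro closed_Collect_eq continuous_intros continuous_on_product_coordinates)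
  ultimately have "compact K" unfolding K_def by (rule compact_Int_closed)
  have restrict_in_K: "(\<lambda>i. if i \<in> S then y i else 0) \<in> K" if y: "(\<Sum>i\<in>S. (y i)\<^sup>2) = 1" for y
  proof -
    have "(y i)\<^sup>2 \<le> 1" if "i \<in> S" for i
      using member_le_sum[of i S "\<lambda>i. (y i)\<^sup>2"] that fin y by simp
    then show ?thesis using y unfolding K_def box_def by (auto simp: abs_square_le_1 abs_le_iff)
  qed
  obtain i0 where "i0 \<in> S" using \<open>S \<noteq> {}\<close> by auto
  then have "(\<lambda>i. if i \<in> S then (if i = i0 then 1 else 0) else 0) \<in> K"
    by (intro restrict_in_K) (simp add: fin if_distrib[of "\<lambda>x. x\<^sup>2"] cong: if_cong)
  then have "K \<noteq> {}" by auto
  have "continuous_on K (\<lambda>u. bilin_form A S u u)"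
    unfolding bilin_form_def
    by (intro continuous_intros continuous_on_subset[OF continuous_on_product_coordinates]) auto
  then obtain u where "u \<in> K" and u_max: "\<And>y. y \<in> K \<Longrightarrow> bilin_form A S y y \<le> bilin_form A S u u"
    using continuous_attains_sup[OF \<open>compact K\<close> \<open>K \<noteq> {}\<close>] by blast
  show ?thesis
  proof
    show "(\<Sum>i\<in>S. (u i)\<^sup>2) = 1" "\<And>j. j \<notin> S \<Longrightarrow> u j = 0"
      using \<open>u \<in> K\<close> unfolding K_def box_def by (auto simp: PiE_iff) (metis singletonD)
  next
    fix y :: "nat \<Rightarrow> real" assume "(\<Sum>i\<in>S. (y i)\<^sup>2) = 1"
    then have "bilin_form A S (\<lambda>i. if i \<in> S then y i else 0) (\<lambda>i. if i \<in> S then y i else 0)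
        \<le> bilin_form A S u u"
      by (intro u_max restrict_in_K)
    then show "bilin_form A S y y \<le> bilin_form A S u u"
      by (subst (asm) bilin_form_cong[of S _ y _ y]) auto
  qed
qed

lemma bilin_form_le_max_mult_sum_sq:
  assumes fin: "finite S"
    and u_max: "\<And>y. (\<Sum>i\<in>S. (y i)\<^sup>2) = 1 \<Longrightarrow> bilin_form A S y y \<le> bilin_form A S u u"
  shows "bilin_form A S z z \<le> bilin_form A S u u * (\<Sum>i\<in>S. (z i)\<^sup>2)"
proof (cases "(\<Sum>i\<in>S. (z i)\<^sup>2) = 0")
  case True
  then have "bilin_form A S z z = bilin_form A S (\<lambda>i. 0) (\<lambda>i. 0)"
    using fin by (intro bilin_form_cong) (auto simp: sum_nonneg_eq_0_iff)
  then show ?thesis using True by (simp add: bilin_form_def)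
next
  case False
  define s where "s = (\<Sum>i\<in>S. (z i)\<^sup>2)"
  have "s > 0" using False unfolding s_def by (simp add: order_neq_le_trans sum_nonneg)
  have "(\<Sum>i\<in>S. (z i / sqrt s)\<^sup>2) = 1"
    using \<open>s > 0\<close> unfolding s_def by (simp add: power_divide sum_divide_distrib[symmetric])
  then have "bilin_form A S (\<lambda>i. (1 / sqrt s) * z i) (\<lambda>i. (1 / sqrt s) * z i) \<le> bilin_form A S u u"
    by (intro u_max) simp
  then have "(1 / sqrt s)\<^sup>2 * bilin_form A S z z \<le> bilin_form A S u u"
    by (simp only: bilin_form_scaled)
  then have "bilin_form A S z z / s \<le> bilin_form A S u u"
    using \<open>s > 0\<close> by (simp add: power_divide)
  then show ?thesis using \<open>s > 0\<close> unfolding s_def[symmetric] by (simp add: divide_le_eq mult.commute)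
qed

lemma max_bilin_form_unit_is_eigenvector:
  assumes fin: "finite S" and sym: "\<And>i j. i \<in> S \<Longrightarrow> j \<in> S \<Longrightarrow> A i j = A j i"
    and u1: "(\<Sum>i\<in>S. (u i)\<^sup>2) = 1"
    and u_max: "\<And>y. (\<Sum>i\<in>S. (y i)\<^sup>2) = 1 \<Longrightarrow> bilin_form A S y y \<le> bilin_form A S u u"
  shows "\<And>i. i \<in> S \<Longrightarrow> (\<Sum>j\<in>S. A i j * u j) = bilin_form A S u u * u i"
proof -
  define \<mu> where "\<mu> = bilin_form A S u u"
  have homogeneous: "bilin_form A S z z \<le> \<mu> * (\<Sum>i\<in>S. (z i)\<^sup>2)" for z
    unfolding \<mu>_def by (rule bilin_form_le_max_mult_sum_sq[OF fin u_max])
  \<comment> \<open>\<open>t \<mapsto> q(u + t h) - \<mu> |u + t h|\<^sup>2\<close> is a quadratic that is \<open>\<le> 0\<close> and vanishes at 0\<close>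
  have stationary: "bilin_form A S u h = \<mu> * (\<Sum>i\<in>S. u i * h i)" for h
  proof -
    have "2 * t * (bilin_form A S u h - \<mu> * (\<Sum>i\<in>S. u i * h i))
        + t\<^sup>2 * (bilin_form A S h h - \<mu> * (\<Sum>i\<in>S. (h i)\<^sup>2)) \<le> 0" for t
    proof -
      have "bilin_form A S (\<lambda>i. u i + t * h i) (\<lambda>i. u i + t * h i) \<le> \<mu> * (\<Sum>i\<in>S. (u i + t * h i)\<^sup>2)"
        by (rule homogeneous)
      moreover have "(\<Sum>i\<in>S. (u i + t * h i)\<^sup>2)
          = 1 + 2 * t * (\<Sum>i\<in>S. u i * h i) + t\<^sup>2 * (\<Sum>i\<in>S. (h i)\<^sup>2)"
        using u1 by (simp add: power2_sum sum.distrib sum_distrib_left power_mult_distrib algebra_simps)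
      moreover have "bilin_form A S h u = bilin_form A S u h" by (rule bilin_form_commute[OF sym])
      ultimately show ?thesis unfolding bilin_form_add_scaled \<mu>_def by (simp add: algebra_simps)
    qed
    then show ?thesis by (metis linear_coeff_eq_0_if_quadratic_nonpos eq_iff_diff_eq_0)
  qed
  define h where "h i = (\<Sum>j\<in>S. A i j * u j) - \<mu> * u i" for i
  have "(\<Sum>i\<in>S. (h i)\<^sup>2) = (\<Sum>i\<in>S. h i * (\<Sum>j\<in>S. A i j * u j) - \<mu> * (u i * h i))"
    by (intro sum.cong refl) (simp add: h_def power2_eq_square algebra_simps)
  also have "\<dots> = bilin_form A S h u - \<mu> * (\<Sum>i\<in>S. u i * h i)"
    by (simp add: bilin_form_def sum_subtractf sum_distrib_left)
  also have "\<dots> = 0"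
    using stationary[of h] bilin_form_commute[of S A h u, OF sym] by simp
  finally have "\<forall>i\<in>S. h i = 0" using fin by (simp add: sum_nonneg_eq_0_iff)
  then show "\<And>i. i \<in> S \<Longrightarrow> (\<Sum>j\<in>S. A i j * u j) = bilin_form A S u u * u i"
    unfolding h_def \<mu>_def by simp
qed

lemma top_sub_eigvec_max_rayleigh:
  assumes fin: "finite S" and sym: "\<And>i j. i \<in> S \<Longrightarrow> j \<in> S \<Longrightarrow> A i j = A j i"
    and top: "top_sub_eigvec A S u" and y1: "(\<Sum>i\<in>S. (y i)\<^sup>2) = 1"
  shows "bilin_form A S y y \<le> bilin_form A S u u"
proof -
  obtain lam where u_eig: "sub_eigenpair A S lam u"
    and lam_top: "\<And>lam' u'. sub_eigenpair A S lam' u' \<Longrightarrow> lam' \<le> lam"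
    using top unfolding top_sub_eigvec_def by blast
  have "S \<noteq> {}" using u_eig unfolding sub_eigenpair_def by blast
  then obtain u' where u'1: "(\<Sum>i\<in>S. (u' i)\<^sup>2) = 1" and u'0: "\<And>j. j \<notin> S \<Longrightarrow> u' j = 0"
    and u'_max: "\<And>y. (\<Sum>i\<in>S. (y i)\<^sup>2) = 1 \<Longrightarrow> bilin_form A S y y \<le> bilin_form A S u' u'"
    using exists_max_bilin_form_unit[OF fin] by metis
  have "\<exists>j\<in>S. u' j \<noteq> 0" using u'1 by (metis (no_types, lifting) power_zero_numeral sum.neutral zero_neq_one)
  then have "sub_eigenpair A S (bilin_form A S u' u') u'"
    unfolding sub_eigenpair_def
    using u'0 max_bilin_form_unit_is_eigenvector[OF fin sym u'1 u'_max] by blast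
  then have "bilin_form A S u' u' \<le> lam" by (rule lam_top)
  also have "lam = bilin_form A S u u"
  proof -
    have "bilin_form A S u u = lam * (\<Sum>i\<in>S. u i * u i)"
      by (rule bilin_form_eigen) (use u_eig in \<open>auto simp: sub_eigenpair_def\<close>)
    then show ?thesis using top by (simp add: top_sub_eigvec_def power2_eq_square)
  qed
  finally show ?thesis using u'_max[OF y1] by linarith
qed

section \<open>Spectral norms of sparse principal submatrices\<close>

lemma bdd_above_sub_spec_norm_set:
  fixes A :: "nat \<Rightarrow> nat \<Rightarrow> real"
  assumes "finite U"
  shows "bdd_above {sqrt (\<Sum>i\<in>U. (\<Sum>j\<in>U. A i j * u j)\<^sup>2) | u. (\<Sum>j\<in>U. (u j)\<^sup>2) = 1}"
proof (rule bdd_aboveI, clarify)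
  fix u :: "nat \<Rightarrow> real" assume u1: "(\<Sum>j\<in>U. (u j)\<^sup>2) = 1"
  have u_le_1: "\<bar>u j\<bar> \<le> 1" if "j \<in> U" for j
    using member_le_sum[of j U "\<lambda>j. (u j)\<^sup>2"] that assms u1 by (simp add: abs_square_le_1[symmetric])
  have "sqrt (\<Sum>i\<in>U. (\<Sum>j\<in>U. A i j * u j)\<^sup>2) \<le> (\<Sum>i\<in>U. \<bar>\<Sum>j\<in>U. A i j * u j\<bar>)"
    using L2_set_le_sum_abs[of "\<lambda>i. \<Sum>j\<in>U. A i j * u j" U] by (simp add: L2_set_def)
  also have "\<dots> \<le> (\<Sum>i\<in>U. \<Sum>j\<in>U. \<bar>A i j\<bar>)"
    by (intro sum_mono order_trans[OF sum_abs]) (simp add: abs_mult mult_left_le u_le_1)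
  finally show "sqrt (\<Sum>i\<in>U. (\<Sum>j\<in>U. A i j * u j)\<^sup>2) \<le> (\<Sum>i\<in>U. \<Sum>j\<in>U. \<bar>A i j\<bar>)" .
qed

lemma L2_set_sub_matvec_le:
  assumes fin: "finite U" and c: "sub_spec_norm A U \<le> c"
  shows "L2_set (\<lambda>i. \<Sum>j\<in>U. A i j * x j) U \<le> c * L2_set x U"
proof (cases "L2_set x U = 0")
  case True
  then have "\<forall>j\<in>U. x j = 0" using fin by (simp add: L2_set_eq_0_iff)
  then show ?thesis using True by (simp add: L2_set_def)
next
  case False
  define s where "s = L2_set x U"
  have "s > 0" using False unfolding s_def by (simp add: order_neq_le_trans)
  have "(\<Sum>j\<in>U. (x j / s)\<^sup>2) = (L2_set x U)\<^sup>2 / s\<^sup>2"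
    by (simp add: L2_set_power2 power_divide sum_divide_distrib)
  then have unit: "(\<Sum>j\<in>U. (x j / s)\<^sup>2) = 1" using \<open>s > 0\<close> unfolding s_def by simp
  have "L2_set (\<lambda>i. \<Sum>j\<in>U. A i j * (x j / s)) U \<le> sub_spec_norm A U"
    unfolding sub_spec_norm_def L2_set_def using unit
    by (intro cSup_upper[OF _ bdd_above_sub_spec_norm_set[OF fin]] CollectI exI[of _ "\<lambda>j. x j / s"]) simp
  moreover have "L2_set (\<lambda>i. \<Sum>j\<in>U. A i j * (x j / s)) U = L2_set (\<lambda>i. \<Sum>j\<in>U. A i j * x j) U / s"
    using L2_set_mult_left[of "1 / s" "\<lambda>i. \<Sum>j\<in>U. A i j * x j" U] \<open>s > 0\<close>
    by (simp add: sum_divide_distrib)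
  ultimately have "L2_set (\<lambda>i. \<Sum>j\<in>U. A i j * x j) U / s \<le> c" using c by linarith
  then show ?thesis using \<open>s > 0\<close> unfolding s_def[symmetric] by (simp add: divide_le_eq)
qed

definition sparse_spec_bound :: "nat \<Rightarrow> nat \<Rightarrow> (nat \<Rightarrow> nat \<Rightarrow> real) \<Rightarrow> real \<Rightarrow> bool" where
  "sparse_spec_bound n s W \<epsilon> \<longleftrightarrow>
     (\<forall>U. U \<subseteq> {..<n} \<longrightarrow> U \<noteq> {} \<longrightarrow> card U \<le> s \<longrightarrow> sub_spec_norm W U \<le> \<epsilon>)"

lemma sparse_spec_boundD:
  assumes "sparse_spec_bound n s W \<epsilon>" "U \<subseteq> {..<n}" "card U \<le> s"
  shows "L2_set (\<lambda>i. \<Sum>j\<in>U. W i j * x j) U \<le> \<epsilon> * L2_set x U"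
proof (cases "U = {}")
  case False
  have "finite U" using assms(2) finite_subset by blast
  then show ?thesis using assms False unfolding sparse_spec_bound_def by (blast intro: L2_set_sub_matvec_le)
qed simp

lemma abs_bilin_form_le_sparse:
  assumes "sparse_spec_bound n s W \<epsilon>" "S \<subseteq> {..<n}" "card S \<le> s" "(\<Sum>i\<in>S. (x i)\<^sup>2) = 1"
  shows "\<bar>bilin_form W S x x\<bar> \<le> \<epsilon>"
proof -
  have "L2_set x S = 1" using assms(4) by (simp add: L2_set_def)
  have "\<bar>bilin_form W S x x\<bar> \<le> L2_set x S * L2_set (\<lambda>i. \<Sum>j\<in>S. W i j * x j) S"
    by (rule abs_bilin_form_le)
  also have "\<dots> \<le> \<epsilon>" using sparse_spec_boundD[OF assms(1-3), of x] \<open>L2_set x S = 1\<close> by simp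
  finally show ?thesis .
qed

lemma L2_set_matvec_le_sparse:
  assumes W: "sparse_spec_bound n s W \<epsilon>" "U \<subseteq> {..<n}" "card U \<le> s" and w: "vsupp n w \<subseteq> U"
  shows "L2_set (matvec n W w) U \<le> \<epsilon> * vnorm n w"
proof -
  have w_outside: "\<And>j. j < n \<Longrightarrow> j \<notin> U \<Longrightarrow> w j = 0" using w by auto
  have "L2_set (matvec n W w) U = L2_set (\<lambda>i. \<Sum>j\<in>U. W i j * w j) U"
    unfolding matvec_def using W(2) w_outside by (intro L2_set_cong refl sum.mono_neutral_right) auto
  also have "\<dots> \<le> \<epsilon> * L2_set w U" by (rule sparse_spec_boundD[OF W])
  also have "L2_set w U = vnorm n w"
    unfolding vnorm_eq_L2_set using W(2) w_outside by (intro L2_set_eq_on_subset[symmetric]) auto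
  finally show ?thesis .
qed

text \<open>The size bound \<open>4 * s\<close> (rather than the \<open>3 * k'\<close> needed by a TPower step) makes the
  constant exact: \<open>sqrt 4 = 2\<close>.\<close>

lemma event_E_imp_sparse_spec_bound:
  assumes E: "event_E C0 n m \<theta> W" and "0 \<le> C0 * (1 + \<theta>)" "1 \<le> n"
  shows "sparse_spec_bound n (4 * s) W (2 * C0 * (1 + \<theta>) * sqrt (real s * ln (real n) / real m))"
  unfolding sparse_spec_bound_def
proof (intro allI impI)
  fix U assume U: "U \<subseteq> {..<n}" "U \<noteq> {}" "card U \<le> 4 * s"
  then have "card U \<in> {1..n}"
    using card_mono[OF _ U(1)] finite_subset[OF U(1)] by (auto simp: Suc_le_eq card_gt_0_iff)
  then have "sub_spec_norm W U \<le> C0 * (1 + \<theta>) * sqrt (real (card U) * ln (real n) / real m)"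
    using E U(1) unfolding event_E_def by blast
  also have "\<dots> \<le> C0 * (1 + \<theta>) * sqrt (4 * (real s * ln (real n) / real m))"
  proof -
    have "real (card U) * ln (real n) \<le> 4 * real s * ln (real n)"
      using U(3) \<open>1 \<le> n\<close> by (intro mult_right_mono) auto
    then have "real (card U) * ln (real n) / real m \<le> 4 * (real s * ln (real n) / real m)"
      by (simp add: divide_right_mono)
    then show ?thesis using \<open>0 \<le> C0 * (1 + \<theta>)\<close> by (intro mult_left_mono real_sqrt_le_mono)
  qed
  also have "\<dots> = 2 * C0 * (1 + \<theta>) * sqrt (real s * ln (real n) / real m)"
    unfolding real_sqrt_mult by simp
  finally show "sub_spec_norm W U \<le> 2 * C0 * (1 + \<theta>) * sqrt (real s * ln (real n) / real m)" .
qed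

section \<open>Hard thresholding\<close>

lemma top_set_sum_sq_exchange:
  fixes y :: "nat \<Rightarrow> real"
  assumes top: "top_set n r y T" and V: "V \<subseteq> {..<n}" "card V \<le> r"
  shows "(\<Sum>i\<in>V - T. (y i)\<^sup>2) \<le> (\<Sum>i\<in>T - V. (y i)\<^sup>2)"
proof (cases "V - T = {}")
  case True
  then show ?thesis by (metis sum.empty sum_nonneg zero_le_power2)
next
  case False
  have Tn: "T \<subseteq> {..<n}" and cT: "card T = min r n"
    and dom: "\<And>i j. i \<in> T \<Longrightarrow> j \<in> {..<n} - T \<Longrightarrow> \<bar>y j\<bar> \<le> \<bar>y i\<bar>"
    using top unfolding top_set_def by auto
  have fT: "finite T" and fV: "finite V" using Tn V finite_subset by auto
  have "card V \<le> card T" using card_mono[OF _ V(1)] V(2) cT by simp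
  then have card_le: "card (V - T) \<le> card (T - V)"
    using fT fV by (simp add: card_Diff_subset_Int Int_commute)
  define M where "M = Max ((\<lambda>i. (y i)\<^sup>2) ` (V - T))"
  have "M \<in> (\<lambda>i. (y i)\<^sup>2) ` (V - T)" unfolding M_def using fV False by (intro Max_in) auto
  then obtain i where i: "i \<in> V - T" and Mi: "M = (y i)\<^sup>2" by blast
  have "(\<Sum>i\<in>V - T. (y i)\<^sup>2) \<le> of_nat (card (V - T)) * M"
    by (rule sum_bounded_above) (use fV in \<open>auto simp: M_def\<close>)
  also have "\<dots> \<le> of_nat (card (T - V)) * M"
    using card_le Mi by (simp add: mult_right_mono)
  also have "\<dots> \<le> (\<Sum>i\<in>T - V. (y i)\<^sup>2)"
  proof (rule sum_bounded_below)
    fix j assume "j \<in> T - V"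
    then have "\<bar>y i\<bar> \<le> \<bar>y j\<bar>" using dom i V(1) by blast
    then show "M \<le> (y j)\<^sup>2" unfolding Mi by (simp add: abs_le_square_iff)
  qed
  finally show ?thesis .
qed

lemma hard_thr_top_set_error:
  fixes y v z :: "nat \<Rightarrow> real"
  assumes top: "top_set n r y T" and V: "V \<subseteq> {..<n}" "card V \<le> r"
    and v0: "\<And>i. i < n \<Longrightarrow> i \<notin> V \<Longrightarrow> v i = 0"
    and y: "\<And>i. i < n \<Longrightarrow> y i = c * v i + z i"
  shows "vnorm n (\<lambda>i. hard_thr T y i - c * v i) \<le> 2 * L2_set z (T \<union> V)"
proof -
  have Tn: "T \<subseteq> {..<n}" using top unfolding top_set_def by simp
  define zTV where "zTV i = (if i \<in> T \<union> V then z i else 0)" for i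
  define yVT where "yVT i = (if i \<in> V - T then y i else 0)" for i
  have "vnorm n (\<lambda>i. hard_thr T y i - c * v i) = L2_set (\<lambda>i. zTV i + - yVT i) {..<n}"
    unfolding vnorm_eq_L2_set
    by (rule L2_set_cong) (use y v0 in \<open>auto simp: hard_thr_def zTV_def yVT_def\<close>)
  also have "\<dots> \<le> L2_set zTV {..<n} + L2_set yVT {..<n}"
    using L2_set_triangle_ineq[of zTV "\<lambda>i. - yVT i"] by simp
  also have "L2_set zTV {..<n} = L2_set z (T \<union> V)"
    unfolding zTV_def by (rule L2_set_restrict) (use Tn V in auto)
  also have "L2_set yVT {..<n} = L2_set y (V - T)"
    unfolding yVT_def by (rule L2_set_restrict) (use V in auto)
  also have "\<dots> \<le> L2_set y (T - V)"
    unfolding L2_set_def using top_set_sum_sq_exchange[OF top V] by simp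
  also have "\<dots> = L2_set z (T - V)"
    using y v0 Tn by (intro L2_set_cong) auto
  also have "\<dots> \<le> L2_set z (T \<union> V)"
    by (rule L2_set_subset_mono) (use Tn V finite_subset in auto)
  finally show ?thesis by simp
qed

section \<open>Truncated power iteration\<close>

lemma matvec_rank_one_update:
  assumes "\<And>i j. G i j = \<theta> * v i * v j + W i j"
  shows "matvec n G w i = \<theta> * vdot n w v * v i + matvec n W w i"
  unfolding matvec_def vdot_def assms by (simp add: sum.distrib sum_distrib_left algebra_simps)

lemma tpower_step:
  fixes G W :: "nat \<Rightarrow> nat \<Rightarrow> real"
  assumes "0 < \<theta>" "0 < \<epsilon>"
    and G: "\<And>i j. G i j = \<theta> * v i * v j + W i j"
    and W: "sparse_spec_bound n s W \<epsilon>" "3 * r \<le> s"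
    and v: "vnorm n v = 1" "card (vsupp n v) \<le> r"
    and w: "vnorm n w = 1" "card (vsupp n w) \<le> r"
    and top: "top_set n r (matvec n G w) T"
    and corr: "4 * \<epsilon> \<le> \<theta> * \<bar>vdot n w v\<bar>"
  shows "vnorm n (vnormalize n (hard_thr T (matvec n G w))) = 1"
    and "sin_angle n (vnormalize n (hard_thr T (matvec n G w))) v \<le> 4 * \<epsilon> / (\<theta> * \<bar>vdot n w v\<bar>)"
proof -
  define a where "a = vdot n w v"
  define h where "h = hard_thr T (matvec n G w)"
  define U where "U = T \<union> vsupp n v \<union> vsupp n w"
  have Tn: "T \<subseteq> {..<n}" and "card T \<le> r" using top unfolding top_set_def by auto
  have Un: "U \<subseteq> {..<n}" unfolding U_def using Tn by auto
  have "card U \<le> card T + card (vsupp n v) + card (vsupp n w)"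
    unfolding U_def by (meson card_Un_le add_le_mono1 order_trans)
  then have "card U \<le> s" using \<open>card T \<le> r\<close> v(2) w(2) W(2) by linarith
  have "L2_set (matvec n W w) (T \<union> vsupp n v) \<le> L2_set (matvec n W w) U"
    by (rule L2_set_subset_mono) (use Un finite_subset in \<open>auto simp: U_def\<close>)
  also have "\<dots> \<le> \<epsilon>"
    using L2_set_matvec_le_sparse[OF W(1) Un \<open>card U \<le> s\<close>, of w] w(1) unfolding U_def by auto
  finally have err: "vnorm n (\<lambda>i. h i - \<theta> * a * v i) \<le> 2 * \<epsilon>"
    using hard_thr_top_set_error[OF top _ v(2), of v "\<theta> * a" "matvec n W w"]
      matvec_rank_one_update[OF G] unfolding h_def a_def by fastforce
  have "\<theta> * \<bar>a\<bar> / 2 \<le> vnorm n h"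
    using vnorm_ge_abs_sub_deviation[OF v(1), of "\<theta> * a" h] err corr \<open>0 < \<theta>\<close>
    by (simp add: abs_mult a_def)
  then have "0 < vnorm n h" using corr \<open>0 < \<epsilon>\<close> unfolding a_def by linarith
  then show "vnorm n (vnormalize n (hard_thr T (matvec n G w))) = 1"
    unfolding h_def by (simp add: vnorm_vnormalize)
  have "sin_angle n (vnormalize n h) v \<le> vnorm n (\<lambda>i. h i - \<theta> * a * v i) / vnorm n h"
    by (rule sin_angle_vnormalize_le[OF v(1) \<open>0 < vnorm n h\<close>])
  also have "\<dots> \<le> 2 * \<epsilon> / (\<theta> * \<bar>a\<bar> / 2)"
    using err \<open>\<theta> * \<bar>a\<bar> / 2 \<le> vnorm n h\<close> corr \<open>0 < \<epsilon>\<close> unfolding a_def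
    by (intro frac_le) auto
  finally show "sin_angle n (vnormalize n (hard_thr T (matvec n G w))) v \<le> 4 * \<epsilon> / (\<theta> * \<bar>vdot n w v\<bar>)"
    unfolding h_def a_def by simp
qed

lemma tpower_run_sin_angle_le:
  fixes G W :: "nat \<Rightarrow> nat \<Rightarrow> real" and w :: "nat \<Rightarrow> nat \<Rightarrow> real"
  assumes "0 < \<theta>" "0 < \<epsilon>" "0 < \<gamma>" "\<gamma> \<le> 1" "16 * \<epsilon> \<le> \<theta> * \<gamma>"
    and G: "\<And>i j. G i j = \<theta> * v i * v j + W i j"
    and W: "sparse_spec_bound n s W \<epsilon>" "3 * r \<le> s"
    and v: "vnorm n v = 1" "card (vsupp n v) \<le> r"
    and run: "TPower_run n r G w"
    and w0: "vnorm n (w 0) = 1" "card (vsupp n (w 0)) \<le> r" "\<gamma> / 2 \<le> \<bar>vdot n (w 0) v\<bar>"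
  shows "sin_angle n (w (Suc t)) v \<le> 8 * \<epsilon> / (\<theta> * \<gamma>)"
proof -
  define good where
    "good u \<longleftrightarrow> vnorm n u = 1 \<and> card (vsupp n u) \<le> r \<and> \<gamma> / 2 \<le> \<bar>vdot n u v\<bar>" for u
  have step: "good (w (Suc t)) \<and> sin_angle n (w (Suc t)) v \<le> 8 * \<epsilon> / (\<theta> * \<gamma>)"
    if "good (w t)" for t
  proof -
    obtain T where top: "top_set n r (matvec n G (w t)) T"
      and w_next: "w (Suc t) = vnormalize n (hard_thr T (matvec n G (w t)))"
      using run unfolding TPower_run_def vnormalize_def by blast
    have unit: "vnorm n (w t) = 1" and sparse: "card (vsupp n (w t)) \<le> r"
      and corr: "\<gamma> / 2 \<le> \<bar>vdot n (w t) v\<bar>" using that unfolding good_def by auto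
    have "\<theta> * (\<gamma> / 2) \<le> \<theta> * \<bar>vdot n (w t) v\<bar>" using corr \<open>0 < \<theta>\<close> by simp
    then have "4 * \<epsilon> \<le> \<theta> * \<bar>vdot n (w t) v\<bar>" using \<open>16 * \<epsilon> \<le> \<theta> * \<gamma>\<close> \<open>0 < \<epsilon>\<close> by linarith
    note tp = tpower_step[OF \<open>0 < \<theta>\<close> \<open>0 < \<epsilon>\<close> G W v unit sparse top this, folded w_next]
    have "4 * \<epsilon> / (\<theta> * \<bar>vdot n (w t) v\<bar>) \<le> 4 * \<epsilon> / (\<theta> * (\<gamma> / 2))"
      using corr \<open>0 < \<theta>\<close> \<open>0 < \<gamma>\<close> \<open>0 < \<epsilon>\<close> by (intro divide_left_mono mult_left_mono mult_pos_pos) auto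
    then have sin: "sin_angle n (w (Suc t)) v \<le> 8 * \<epsilon> / (\<theta> * \<gamma>)" using tp(2) by simp
    have "vsupp n (w (Suc t)) \<subseteq> T" unfolding w_next vnormalize_def hard_thr_def by auto
    then have "card (vsupp n (w (Suc t))) \<le> r"
      using top unfolding top_set_def by (metis card_mono finite_subset min.bounded_iff finite_lessThan)
    moreover have "\<gamma> / 2 \<le> \<bar>vdot n (w (Suc t)) v\<bar>"
    proof -
      have "8 * \<epsilon> / (\<theta> * \<gamma>) \<le> 1 / 2"
        using \<open>16 * \<epsilon> \<le> \<theta> * \<gamma>\<close> \<open>0 < \<theta>\<close> \<open>0 < \<gamma>\<close> by (simp add: divide_le_eq)
      then have "1 / 2 \<le> \<bar>vdot n (w (Suc t)) v\<bar>"
        using sin by (intro half_le_abs_vdot_if_sin_angle_le_half) linarith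
      then show ?thesis using \<open>\<gamma> \<le> 1\<close> by linarith
    qed
    ultimately show ?thesis using tp(1) sin unfolding good_def by simp
  qed
  have "good (w t)" for t
    by (induction t) (use w0 step in \<open>auto simp: good_def\<close>)
  then show ?thesis using step by blast
qed

section \<open>Initialisation by SEP\<close>

lemma SEP_run_final_support:
  assumes run: "SEP_run n k G S e u" and "1 \<le> k"
  shows "S k \<subseteq> {..<n}" "card (S k) \<le> k" "top_sub_eigvec G (S k) u"
proof -
  show "top_sub_eigvec G (S k) u" using run unfolding SEP_run_def by blast
  have "S k \<subseteq> {..<n} \<and> card (S k) \<le> k"
  proof (cases "k = 1")
    case True
    then show ?thesis using run unfolding SEP_run_def by auto
  next
    case False
    then have "k - 1 \<in> {1..k - 1}" using \<open>1 \<le> k\<close> by auto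
    then have "top_set n (k - 1 + 1) (\<lambda>i. matvec n G (e (k - 1)) i) (S (k - 1 + 1))"
      using run unfolding SEP_run_def by blast
    then show ?thesis using \<open>1 \<le> k\<close> unfolding top_set_def by auto
  qed
  then show "S k \<subseteq> {..<n}" "card (S k) \<le> k" by auto
qed

lemma top_sub_eigvec_unit_support:
  assumes S: "S \<subseteq> {..<n}" and u: "top_sub_eigvec A S u"
  shows "vnorm n u = 1" "vsupp n u \<subseteq> S"
proof -
  have zero: "\<And>j. j \<notin> S \<Longrightarrow> u j = 0" and "(\<Sum>j\<in>S. (u j)\<^sup>2) = 1"
    using u unfolding top_sub_eigvec_def sub_eigenpair_def by auto
  then show "vsupp n u \<subseteq> S" by auto
  have "vnorm n u = L2_set u S"
    unfolding vnorm_eq_L2_set by (rule L2_set_eq_on_subset) (use S zero in auto)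
  then show "vnorm n u = 1" using \<open>(\<Sum>j\<in>S. (u j)\<^sup>2) = 1\<close> by (simp add: L2_set_def)
qed

lemma exists_unit_restr_dot:
  assumes "0 < restr_norm S v"
  obtains y where "(\<Sum>i\<in>S. (y i)\<^sup>2) = 1" "(\<Sum>i\<in>S. v i * y i) = restr_norm S v"
proof
  define r where "r = restr_norm S v"
  have r2: "r\<^sup>2 = (\<Sum>i\<in>S. (v i)\<^sup>2)" unfolding r_def restr_norm_def by (simp add: sum_nonneg)
  show "(\<Sum>i\<in>S. (v i / r)\<^sup>2) = 1"
    unfolding power_divide sum_divide_distrib[symmetric] r2[symmetric] using assms r_def by simp
  show "(\<Sum>i\<in>S. v i * (v i / r)) = restr_norm S v"
    unfolding times_divide_eq_right sum_divide_distrib[symmetric] power2_eq_square[symmetric]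
      r2[symmetric] using assms r_def by (simp add: power2_eq_square)
qed

lemma top_sub_eigvec_correlation:
  fixes G W :: "nat \<Rightarrow> nat \<Rightarrow> real"
  assumes "0 < \<theta>" "0 < \<gamma>" "\<gamma> \<le> 1" "4 * \<epsilon> \<le> \<theta> * \<gamma>"
    and G: "\<And>i j. G i j = \<theta> * v i * v j + W i j" and sym: "\<And>i j. G i j = G j i"
    and W: "sparse_spec_bound n s W \<epsilon>" "card S \<le> s"
    and S: "S \<subseteq> {..<n}" and u: "top_sub_eigvec G S u"
    and v_mass: "sqrt \<gamma> \<le> restr_norm S v"
  shows "\<gamma> / 2 \<le> \<bar>vdot n u v\<bar>"
proof -
  have fin: "finite S" using S finite_subset by blast
  note W_small = abs_bilin_form_le_sparse[OF W(1) S W(2)]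
  have rank_one: "bilin_form G S x x = \<theta> * (\<Sum>i\<in>S. v i * x i)\<^sup>2 + bilin_form W S x x" for x
    by (rule bilin_form_rank_one_update) (fact G)
  define r where "r = restr_norm S v"
  have "0 < r" using v_mass \<open>0 < \<gamma>\<close> unfolding r_def by (meson less_le_trans real_sqrt_gt_zero)
  then obtain y where y1: "(\<Sum>i\<in>S. (y i)\<^sup>2) = 1" and "(\<Sum>i\<in>S. v i * y i) = r"
    unfolding r_def by (rule exists_unit_restr_dot)
  have "\<gamma> \<le> r\<^sup>2"
    using v_mass \<open>0 < \<gamma>\<close> real_sqrt_le_iff[of \<gamma> "r\<^sup>2"] unfolding r_def restr_norm_def
    by (simp add: sum_nonneg)
  moreover have "\<theta> * \<gamma> \<le> \<theta> * r\<^sup>2" using \<open>\<gamma> \<le> r\<^sup>2\<close> \<open>0 < \<theta>\<close> by simp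
  ultimately have "\<theta> * \<gamma> - \<epsilon> \<le> bilin_form G S y y"
    using rank_one[of y] W_small[OF y1] \<open>(\<Sum>i\<in>S. v i * y i) = r\<close> by (simp add: abs_le_iff)
  also have "\<dots> \<le> bilin_form G S u u"
    by (rule top_sub_eigvec_max_rayleigh[OF fin sym u y1])
  also have "\<dots> = \<theta> * (vdot n u v)\<^sup>2 + bilin_form W S u u"
  proof -
    have "vdot n u v = (\<Sum>i\<in>S. v i * u i)"
      unfolding vdot_def using S top_sub_eigvec_unit_support(2)[OF S u]
      by (subst mult.commute, intro sum.mono_neutral_right) auto
    then show ?thesis by (simp add: rank_one)
  qed
  also have "\<dots> \<le> \<theta> * (vdot n u v)\<^sup>2 + \<epsilon>"
    using W_small u unfolding top_sub_eigvec_def by fastforce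
  finally have "\<theta> * (\<gamma> / 2) \<le> \<theta> * (vdot n u v)\<^sup>2" using \<open>4 * \<epsilon> \<le> \<theta> * \<gamma>\<close> by simp
  then have "\<gamma> / 2 \<le> (vdot n u v)\<^sup>2" using \<open>0 < \<theta>\<close> by simp
  moreover have "(\<gamma> / 2)\<^sup>2 \<le> \<gamma> / 2"
    using \<open>0 < \<gamma>\<close> \<open>\<gamma> \<le> 1\<close> by (simp add: power2_eq_square mult_le_cancel_left1)
  ultimately have "\<bar>\<gamma> / 2\<bar> \<le> \<bar>vdot n u v\<bar>" unfolding abs_le_square_iff by linarith
  then show ?thesis by simp
qed

lemma mult_sqrt_div_le:
  fixes a b x m :: real
  assumes "0 \<le> a" "0 < b" "0 < m" "0 \<le> x" "a\<^sup>2 * x / b\<^sup>2 \<le> m"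
  shows "a * sqrt (x / m) \<le> b"
proof -
  have "a\<^sup>2 * x / m \<le> b\<^sup>2" using assms by (simp add: divide_le_eq mult.commute)
  then have "sqrt (a\<^sup>2 * x / m) \<le> sqrt (b\<^sup>2)" by (rule real_sqrt_le_mono)
  then show ?thesis using assms(1,2) by (simp add: real_sqrt_mult real_sqrt_divide)
qed

lemma SEP_TPower_sin_angle_le:
  fixes x w :: "nat \<Rightarrow> nat \<Rightarrow> real"
  assumes "0 < C0" "2 \<le> n" "1 \<le> m" "0 < \<theta>" "1 \<le> k" "k \<le> k'" "0 < \<gamma>" "\<gamma> < 1"
    and v: "vnorm n v = 1" "card (vsupp n v) \<le> k"
    and E: "event_E C0 n m \<theta> (W_mat m x \<theta> v)"
    and SEP: "SEP_run n k (Gamma_hat m x) S e (w 0)" "sqrt \<gamma> \<le> restr_norm (S k) v"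
    and run: "TPower_run n k' (Gamma_hat m x) w"
    and sample: "1024 * C0\<^sup>2 * (1 + \<theta>)\<^sup>2 / (\<theta>\<^sup>2 * \<gamma>\<^sup>2) * real k' * ln (real n) \<le> real m"
  shows "sin_angle n (w (Suc t)) v
           \<le> 16 * C0 * (1 + \<theta>) / (\<theta> * \<gamma>) * sqrt (real k' * ln (real n) / real m)"
proof -
  define W where "W = W_mat m x \<theta> v"
  have G: "\<And>i j. Gamma_hat m x i j = \<theta> * v i * v j + W i j" unfolding W_def W_mat_def by simp
  have sym: "\<And>i j. Gamma_hat m x i j = Gamma_hat m x j i" unfolding Gamma_hat_def by (simp add: mult.commute)
  define \<epsilon> where "\<epsilon> = 2 * C0 * (1 + \<theta>) * sqrt (real k' * ln (real n) / real m)"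
  have "0 < \<epsilon>" unfolding \<epsilon>_def using assms(1-6) by simp
  have spec: "sparse_spec_bound n (4 * k') W \<epsilon>"
    unfolding \<epsilon>_def W_def using E assms(1,2,4) by (intro event_E_imp_sparse_spec_bound) auto
  have "32 * C0 * (1 + \<theta>) * sqrt (real k' * ln (real n) / real m) \<le> \<theta> * \<gamma>"
  proof (rule mult_sqrt_div_le)
    show "(32 * C0 * (1 + \<theta>))\<^sup>2 * (real k' * ln (real n)) / (\<theta> * \<gamma>)\<^sup>2 \<le> real m"
      using sample by (simp add: power_mult_distrib)
  qed (use assms(1-4,7) in auto)
  then have small: "16 * \<epsilon> \<le> \<theta> * \<gamma>" unfolding \<epsilon>_def by simp
  note S = SEP_run_final_support[OF SEP(1) \<open>1 \<le> k\<close>]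
  note w0_support = top_sub_eigvec_unit_support[OF S(1,3)]
  have "card (vsupp n (w 0)) \<le> k'"
    using card_mono[OF finite_subset[OF S(1) finite_lessThan] w0_support(2)] S(2) \<open>k \<le> k'\<close> by linarith
  have "\<gamma> / 2 \<le> \<bar>vdot n (w 0) v\<bar>"
    using small S(2) \<open>k \<le> k'\<close> \<open>0 < \<epsilon>\<close> assms(4,7,8)
    by (intro top_sub_eigvec_correlation[OF _ _ _ _ G sym spec _ S(1,3) SEP(2)]) auto
  then have "sin_angle n (w (Suc t)) v \<le> 8 * \<epsilon> / (\<theta> * \<gamma>)"
    using small v w0_support(1) \<open>card (vsupp n (w 0)) \<le> k'\<close> \<open>k \<le> k'\<close> \<open>0 < \<epsilon>\<close> assms(4,7,8)
    by (intro tpower_run_sin_angle_le[OF _ _ _ _ _ G spec _ _ _ run]) auto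
  then show ?thesis unfolding \<epsilon>_def by simp
qed

theorem theorem2:
  fixes C0 :: real
  assumes "C0 > 0"
  shows "\<exists>C1>0. \<exists>C2>0. \<forall>(n::nat) (m::nat) (\<theta>::real) (k::nat) (v::nat \<Rightarrow> real)
           (x::nat \<Rightarrow> nat \<Rightarrow> real) (\<gamma>::real) (k'::nat)
           (S::nat \<Rightarrow> nat set) (e::nat \<Rightarrow> nat \<Rightarrow> real) (w::nat \<Rightarrow> nat \<Rightarrow> real).
     n \<ge> 2 \<and> m \<ge> 1 \<and> \<theta> > 0 \<and> 1 \<le> k \<and> k \<le> n \<and>
     vnorm n v = 1 \<and> card {i. i < n \<and> v i \<noteq> 0} \<le> k \<and>
     event_E C0 n m \<theta> (W_mat m x \<theta> v) \<and>
     0 < \<gamma> \<and> \<gamma> < 1 \<and> k \<le> k' \<and>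
     SEP_run n k (Gamma_hat m x) S e (w 0) \<and>
     restr_norm (S k) v \<ge> sqrt \<gamma> \<and>
     TPower_run n k' (Gamma_hat m x) w \<and>
     real m \<ge> C1 * (1 + \<theta>)\<^sup>2 / (\<theta>\<^sup>2 * \<gamma>\<^sup>2) * real k' * ln (real n)
     \<longrightarrow> (\<forall>T\<ge>1. sin_angle n (w T) v
            \<le> C2 * (1 + \<theta>) / (\<theta> * \<gamma>) * sqrt (real k' * ln (real n) / real m))"
proof (rule exI[of _ "1024 * C0\<^sup>2"], intro conjI exI[of _ "16 * C0"] allI impI)
  fix n m k k' T :: nat and \<theta> \<gamma> :: real and v and x S e and w :: "nat \<Rightarrow> nat \<Rightarrow> real"
  assume hyps: "n \<ge> 2 \<and> m \<ge> 1 \<and> \<theta> > 0 \<and> 1 \<le> k \<and> k \<le> n \<and>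
     vnorm n v = 1 \<and> card {i. i < n \<and> v i \<noteq> 0} \<le> k \<and>
     event_E C0 n m \<theta> (W_mat m x \<theta> v) \<and>
     0 < \<gamma> \<and> \<gamma> < 1 \<and> k \<le> k' \<and>
     SEP_run n k (Gamma_hat m x) S e (w 0) \<and>
     restr_norm (S k) v \<ge> sqrt \<gamma> \<and>
     TPower_run n k' (Gamma_hat m x) w \<and>
     real m \<ge> 1024 * C0\<^sup>2 * (1 + \<theta>)\<^sup>2 / (\<theta>\<^sup>2 * \<gamma>\<^sup>2) * real k' * ln (real n)"
    and "1 \<le> T"
  obtain t where "T = Suc t" using \<open>1 \<le> T\<close> by (cases T) auto
  show "sin_angle n (w T) v \<le> 16 * C0 * (1 + \<theta>) / (\<theta> * \<gamma>) * sqrt (real k' * ln (real n) / real m)"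
    unfolding \<open>T = Suc t\<close> using hyps
    by (elim conjE, intro SEP_TPower_sin_angle_le[where k = k and x = x and S = S and e = e, OF \<open>C0 > 0\<close>])
      assumption+
qed (use assms in auto)

end
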